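(* Let $\pi=\pi_1\cdots\pi_n$ be a permutation of $\{1,\dots,n\}$. The Schröder insertion tableau $P(\pi)$ has a single row if and only if for all $1\le i\le n$: (1) if $i$ is odd, then $\pi_i$ is a left-to-right maximum of $\pi$, i.e. $\pi_i>\pi_j$ for all $j<i$; (2) if $i$ is even, then $\pi_i$ is a left-to-right maximum of the sequence obtained from $\pi$ by deleting $\pi_{i-1}$, i.e. $\pi_i>\pi_j$ for all $j<i$ with $j\ne i-1$.
   Context: A Schröder tableau consists of rows $1,2,\dots$; row $r$ has $\lambda_r$ cells at positions $1,\dots,\lambda_r$ (with $\lambda_1\ge\lambda_2\ge\cdots$), each filled with a number. Cells at odd positions are upper triangles, cells at even positions are lower triangles; positions $2m-1$ and $2m$ of a row are twins (they form one square). The Schröder insertion tableau $P(\pi)$ is built as follows. Start with $P$ having one row containing $\pi_1$ at position 1. For $k=2,\dots,n$, insert $\alpha=\pi_k$ into row $i=1$ by the rule: if row $i$ is empty or $\alpha$ is larger than all its entries, place $\alpha$ in a new cell at the end of row $i$ and stop. Otherwise let $j$ be the position in row $i$ of the smallest entry larger than $\alpha$. If $j$ is even (lower triangle): remove the entry $\beta$ at position $j$, write $\alpha$ there, and insert $\beta$ into row $i+1$ by the same rule. If $j$ is odd (upper triangle) and position $j+1$ exists in row $i$ with entry $\beta$: move the entry of position $j$ to position $j+1$, write $\alpha$ at position $j$, and insert $\beta$ into row $i+1$ by the same rule. If $j$ is odd and $j$ is the last position of row $i$: move the entry of position $j$ into a new cell at position $j+1$ at the end of row $i$, write $\alpha$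 at position $j$, and stop. The final $P$ is $P(\pi)$. *)

theory Defs
  imports Main
begin

(* Position p (1-based, as in the paper) of a row r is the list index p-1,
   so odd positions (upper triangles) are even indices, and even positions
   (lower triangles) are odd indices. *)

(* Insert alpha into a row.  Returns the new row and, if an entry is bumped,
   Some beta (to be inserted into the next row); None means "stop". *)
definition schroeder_row_insert :: "nat list \<Rightarrow> nat \<Rightarrow> nat list \<times> nat option" where
  "schroeder_row_insert r \<alpha> =
    (if r = [] \<or> (\<forall>x\<in>set r. x < \<alpha>) then (r @ [\<alpha>], None)
     else
       (let m = Min {x \<in> set r. \<alpha> < x};
            k = hd [i \<leftarrow> [0..<length r]. r ! i = m]
        in if odd k  \<comment> \<open>position k+1 is even: lower triangle\<close>
           then (r[k := \<alpha>], Some (r ! k))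
           else if Suc k < length r  \<comment> \<open>odd position, twin exists\<close>
           then (r[Suc k := r ! k, k := \<alpha>], Some (r ! Suc k))
           else (r[k := \<alpha>] @ [r ! k], None)))"

fun schroeder_insert :: "nat list list \<Rightarrow> nat \<Rightarrow> nat list list" where
  "schroeder_insert [] \<alpha> = [[\<alpha>]]"
| "schroeder_insert (r # rs) \<alpha> =
     (case schroeder_row_insert r \<alpha> of
        (r', None) \<Rightarrow> r' # rs
      | (r', Some \<beta>) \<Rightarrow> r' # schroeder_insert rs \<beta>)"

definition schroeder_P :: "nat list \<Rightarrow> nat list list" where
  "schroeder_P \<pi> = foldl schroeder_insert [[hd \<pi>]] (tl \<pi>)"

end

theory Submission
  imports Defs
begin

text \<open>
  While P has a single row, that row is the increasing arrangement of the letters inserted so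
  far. Inserting a new letter \<alpha> into an increasing row bumps nothing exactly when \<alpha> exceeds
  every entry, or when the only larger entry is the maximum sitting alone in an odd (upper)
  position, which then slides into a new twin cell; i.e. iff \<alpha> exceeds all entries except
  possibly the maximum of an odd-length row. A bumped letter opens a second row and rows never
  disappear. If the prefix already satisfies the condition of the theorem and has odd length,
  its maximum is its last letter, so this stop criterion is exactly the condition on the next
  letter.
\<close>

lemma first_index_above:
  fixes s :: "'a::linorder list"
  assumes "a \<notin> set s" "\<not> (\<forall>x\<in>set s. x < a)"
  obtains k where "k < length s" "a < s ! k" "\<forall>i<k. s ! i < a"
proof -
  have "\<exists>x\<in>set s. a < x" using assms by (metis linorder_neqE)
  then obtain k0 where "k0 < length s \<and> a < s ! k0"
    by (auto simp: in_set_conv_nth)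
  then obtain k where k: "k < length s \<and> a < s ! k"
    and below: "\<forall>i<k. \<not> (i < length s \<and> a < s ! i)"
    using exists_least_iff[where P = "\<lambda>i. i < length s \<and> a < s ! i"] by blast
  have "s ! i < a" if "i < k" for i
  proof -
    have "i < length s" using that k by simp
    then have "\<not> a < s ! i" "s ! i \<noteq> a" using below that assms(1) nth_mem by blast+
    then show ?thesis by simp
  qed
  with k show thesis using that by blast
qed

lemma Max_sorted:
  fixes s :: "'a::linorder list"
  assumes "sorted s" "s \<noteq> []"
  shows "Max (set s) = last s"
proof (rule Max_eqI)
  fix x assume "x \<in> set s"
  then obtain i where "i < length s" "x = s ! i" by (auto simp: in_set_conv_nth)
  then show "x \<le> last s"
    using assms by (simp add: last_conv_nth sorted_nth_mono)
qed (use assms in auto)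

lemma schroeder_row_insert_bump:
  assumes s: "sorted_wrt (<) s" and k: "k < length s" "a < s ! k" "\<forall>i<k. s ! i < a"
  shows "schroeder_row_insert s a =
    (if odd k then (s[k := a], Some (s ! k))
     else if Suc k < length s then (s[Suc k := s ! k, k := a], Some (s ! Suc k))
     else (s[k := a] @ [s ! k], None))"
proof -
  have distinct: "distinct s" using s by (simp add: strict_sorted_iff)
  have "Min {x \<in> set s. a < x} = s ! k"
  proof (rule Min_eqI)
    fix x assume "x \<in> {x \<in> set s. a < x}"
    then obtain i where i: "i < length s" "x = s ! i" "a < s ! i" by (auto simp: in_set_conv_nth)
    then show "s ! k \<le> x"
      using k s by (cases i k rule: linorder_cases) (auto simp: sorted_wrt_iff_nth_less less_imp_le)
  qed (use k in auto)
  moreover have "hd [i \<leftarrow> [0..<length s]. s ! i = s ! k] = k"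
  proof -
    have "k \<in> set [i \<leftarrow> [0..<length s]. s ! i = s ! k]" using k by simp
    then have "hd [i \<leftarrow> [0..<length s]. s ! i = s ! k] \<in> set [i \<leftarrow> [0..<length s]. s ! i = s ! k]"
      by (metis empty_iff hd_in_set list.set(1))
    then show ?thesis using distinct k nth_eq_iff_index_eq by auto
  qed
  moreover have "s \<noteq> []" "\<not> (\<forall>x\<in>set s. x < a)" using k nth_mem by fastforce+
  ultimately show ?thesis by (auto simp: schroeder_row_insert_def Let_def)
qed

lemma schroeder_row_insert_stops_iff:
  assumes s: "sorted_wrt (<) s" and a: "a \<notin> set s"
  shows "snd (schroeder_row_insert s a) = None \<longleftrightarrow>
    (\<forall>x\<in>set s. x < a \<or> odd (length s) \<and> x = Max (set s))"
proof (cases "\<forall>x\<in>set s. x < a")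
  case True
  then show ?thesis by (simp add: schroeder_row_insert_def)
next
  case False
  then obtain k where k: "k < length s" "a < s ! k" "\<forall>i<k. s ! i < a"
    using first_index_above[OF a False] by blast
  have distinct: "distinct s" using s by (simp add: strict_sorted_iff)
  have "s \<noteq> []" using k(1) by auto
  then have Max: "Max (set s) = s ! (length s - 1)"
    using Max_sorted[OF strict_sorted_imp_sorted[OF s]] by (simp add: last_conv_nth)
  have "snd (schroeder_row_insert s a) = None \<longleftrightarrow> even k \<and> k = length s - 1"
    using schroeder_row_insert_bump[OF s k] k by auto
  also have "\<dots> \<longleftrightarrow> (\<forall>x\<in>set s. x < a \<or> odd (length s) \<and> x = Max (set s))"
  proof
    assume last: "even k \<and> k = length s - 1"
    show "\<forall>x\<in>set s. x < a \<or> odd (length s) \<and> x = Max (set s)"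
    proof
      fix x assume "x \<in> set s"
      then obtain i where "i < length s" "x = s ! i" by (auto simp: in_set_conv_nth)
      moreover have "i < k \<or> i = k" using \<open>i < length s\<close> last by linarith
      ultimately show "x < a \<or> odd (length s) \<and> x = Max (set s)"
        using k last Max by auto
    qed
  next
    assume "\<forall>x\<in>set s. x < a \<or> odd (length s) \<and> x = Max (set s)"
    then have "odd (length s)" "s ! k = s ! (length s - 1)"
      using k Max nth_mem[OF k(1)] by (auto dest: bspec[of _ _ "s ! k"])
    then show "even k \<and> k = length s - 1"
      using k(1) distinct nth_eq_iff_index_eq by fastforce
  qed
  finally show ?thesis .
qed

lemma schroeder_row_insert_stop_row:
  assumes s: "sorted_wrt (<) s" and a: "a \<notin> set s"
    and stop: "snd (schroeder_row_insert s a) = None"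
  shows "sorted_wrt (<) (fst (schroeder_row_insert s a)) \<and>
    set (fst (schroeder_row_insert s a)) = insert a (set s)"
proof (cases "\<forall>x\<in>set s. x < a")
  case True
  then show ?thesis using s by (auto simp: schroeder_row_insert_def sorted_wrt_append)
next
  case False
  then obtain k where k: "k < length s" "a < s ! k" "\<forall>i<k. s ! i < a"
    using first_index_above[OF a False] by blast
  have row: "schroeder_row_insert s a = (s[k := a] @ [s ! k], None)" and "Suc k = length s"
    using schroeder_row_insert_bump[OF s k] k stop by (auto split: if_splits)
  then obtain us m where us: "s = us @ [m]" "k = length us"
    by (cases s rule: rev_exhaust) auto
  have "schroeder_row_insert s a = (us @ [a, m], None)"
    using row us by simp
  moreover have "\<forall>u\<in>set us. u < a" using k(3) us by (auto simp: in_set_conv_nth nth_append)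
  ultimately show ?thesis
    using s k(2) us by (auto simp: sorted_wrt_append)
qed

lemma schroeder_insert_not_Nil: "schroeder_insert t a \<noteq> []"
  by (cases t) (auto split: prod.split option.split)

lemma length_schroeder_insert_ge: "length t \<le> length (schroeder_insert t a)"
proof (induction t arbitrary: a)
  case (Cons r rs)
  then show ?case by (auto split: prod.split option.split)
qed simp

lemma schroeder_insert_single_row:
  "schroeder_insert [r] a =
    (if snd (schroeder_row_insert r a) = None then [fst (schroeder_row_insert r a)]
     else [fst (schroeder_row_insert r a), [the (snd (schroeder_row_insert r a))]])"
  by (auto split: prod.split option.split)

lemma schroeder_P_snoc:
  "ys \<noteq> [] \<Longrightarrow> schroeder_P (ys @ [a]) = schroeder_insert (schroeder_P ys) a"
  by (simp add: schroeder_P_def)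

lemma schroeder_P_not_Nil: "schroeder_P xs \<noteq> []"
proof (cases xs rule: rev_exhaust)
  case (snoc ys a)
  then show ?thesis
    by (cases "ys = []") (simp_all add: schroeder_P_def schroeder_P_snoc schroeder_insert_not_Nil)
qed (simp add: schroeder_P_def)

text \<open>
  Zero-based indices: index \<open>i\<close> is position \<open>i + 1\<close>, so indices \<open>2m\<close> and \<open>2m + 1\<close> are twins, and every
  entry must exceed all earlier entries except its twin.
\<close>
definition twin_lr_maxima :: "'a::linorder list \<Rightarrow> bool" where
  "twin_lr_maxima xs \<longleftrightarrow> (\<forall>i<length xs. \<forall>j<i. (even i \<or> j \<noteq> i - 1) \<longrightarrow> xs ! j < xs ! i)"

lemma twin_lr_maxima_snoc:
  "twin_lr_maxima (ys @ [a]) \<longleftrightarrow> twin_lr_maxima ys \<and>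
    (\<forall>j<length ys. (even (length ys) \<or> j \<noteq> length ys - 1) \<longrightarrow> ys ! j < a)"
  unfolding twin_lr_maxima_def by (auto simp: nth_append less_Suc_eq)

lemma twin_lr_maxima_Max:
  assumes "twin_lr_maxima ys" "odd (length ys)"
  shows "Max (set ys) = ys ! (length ys - 1)"
proof (rule Max_eqI)
  fix x assume "x \<in> set ys"
  then obtain j where "j < length ys" "x = ys ! j" by (auto simp: in_set_conv_nth)
  moreover have "j < length ys - 1 \<or> j = length ys - 1" using \<open>j < length ys\<close> by linarith
  ultimately show "x \<le> ys ! (length ys - 1)"
    using assms unfolding twin_lr_maxima_def by (auto intro: less_imp_le)
next
  show "ys ! (length ys - 1) \<in> set ys" using odd_pos[OF assms(2)] by simp
qed simp

lemma twin_lr_maxima_snoc_iff: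
  assumes "distinct ys" "twin_lr_maxima ys"
  shows "twin_lr_maxima (ys @ [a]) \<longleftrightarrow> (\<forall>x\<in>set ys. x < a \<or> odd (length ys) \<and> x = Max (set ys))"
proof (cases "even (length ys)")
  case True
  then show ?thesis using assms(2) by (simp add: twin_lr_maxima_snoc all_set_conv_all_nth)
next
  case False
  have "ys ! j = Max (set ys) \<longleftrightarrow> j = length ys - 1" if "j < length ys" for j
    using twin_lr_maxima_Max[OF assms(2) False] nth_eq_iff_index_eq[OF assms(1)] that False
    by (metis diff_less length_greater_0_conv less_numeral_extra(1) list.size(3) odd_pos)
  then show ?thesis using assms(2) False by (auto simp: twin_lr_maxima_snoc all_set_conv_all_nth)
qed

lemma schroeder_P_single_row:
  assumes "distinct xs" "xs \<noteq> []"
  shows "(length (schroeder_P xs) = 1 \<longleftrightarrow> twin_lr_maxima xs) \<and>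
    (twin_lr_maxima xs \<longrightarrow> (\<exists>r. schroeder_P xs = [r] \<and> sorted_wrt (<) r \<and> set r = set xs))"
  using assms
proof (induction xs rule: rev_induct)
  case (snoc a ys)
  show ?case
  proof (cases "ys = []")
    case True
    then show ?thesis by (simp add: schroeder_P_def twin_lr_maxima_def)
  next
    case False
    have ys: "distinct ys" "a \<notin> set ys" using snoc.prems by auto
    have P: "schroeder_P (ys @ [a]) = schroeder_insert (schroeder_P ys) a"
      using False by (rule schroeder_P_snoc)
    show ?thesis
    proof (cases "twin_lr_maxima ys")
      case False
      have "length (schroeder_P ys) \<noteq> 1" "0 < length (schroeder_P ys)"
        using snoc.IH ys \<open>ys \<noteq> []\<close> False schroeder_P_not_Nil by auto
      then have "2 \<le> length (schroeder_P (ys @ [a]))"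
        unfolding P using length_schroeder_insert_ge[of "schroeder_P ys" a] by linarith
      then show ?thesis using False twin_lr_maxima_snoc by auto
    next
      case True
      then obtain r where r: "schroeder_P ys = [r]" "sorted_wrt (<) r" "set r = set ys"
        using snoc.IH ys \<open>ys \<noteq> []\<close> by blast
      have a: "a \<notin> set r" using r(3) ys(2) by simp
      have "length r = length ys"
        using r(2,3) ys(1) by (metis distinct_card strict_sorted_iff)
      then have stop_iff: "twin_lr_maxima (ys @ [a]) \<longleftrightarrow> snd (schroeder_row_insert r a) = None"
        using twin_lr_maxima_snoc_iff[OF ys(1) True] schroeder_row_insert_stops_iff[OF r(2) a] r(3)
        by simp
      show ?thesis
      proof (cases "snd (schroeder_row_insert r a) = None")
        case stop: True
        then show ?thesis
          using stop_iff schroeder_row_insert_stop_row[OF r(2) a stop] r(3)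
          unfolding P r(1) schroeder_insert_single_row by simp
      next
        case False
        then show ?thesis using stop_iff unfolding P r(1) schroeder_insert_single_row by auto
      qed
    qed
  qed
qed simp

lemma all_positive_shift:
  "(\<forall>j::nat. 1 \<le> j \<and> j < Suc i \<and> R j \<longrightarrow> Q (j - 1)) \<longleftrightarrow> (\<forall>j<i. R (Suc j) \<longrightarrow> Q j)"
  (is "?L \<longleftrightarrow> ?R")
proof
  assume ?L
  show ?R
  proof (intro allI impI)
    fix j assume "j < i" "R (Suc j)"
    then show "Q j" using \<open>?L\<close>[rule_format, of "Suc j"] by simp
  qed
next
  assume ?R
  show ?L
  proof (intro allI impI)
    fix j assume "1 \<le> j \<and> j < Suc i \<and> R j"
    then show "Q (j - 1)" using \<open>?R\<close> by (cases j) auto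
  qed
qed

lemma twin_lr_maxima_iff_positions:
  "twin_lr_maxima \<pi> \<longleftrightarrow>
    (\<forall>i\<in>{1..length \<pi>}.
       (odd i \<longrightarrow> (\<forall>j. 1 \<le> j \<and> j < i \<longrightarrow> \<pi> ! (j - 1) < \<pi> ! (i - 1))) \<and>
       (even i \<longrightarrow> (\<forall>j. 1 \<le> j \<and> j < i \<and> j \<noteq> i - 1 \<longrightarrow> \<pi> ! (j - 1) < \<pi> ! (i - 1))))"
  (is "_ \<longleftrightarrow> (\<forall>i\<in>_. ?pos i)")
proof -
  have "?pos (Suc i) \<longleftrightarrow> (\<forall>j<i. (even i \<or> j \<noteq> i - 1) \<longrightarrow> \<pi> ! j < \<pi> ! i)" for i
  proof -
    have "(\<forall>j<i. Suc j \<noteq> i \<longrightarrow> \<pi> ! j < \<pi> ! i) \<longleftrightarrow> (\<forall>j<i. j \<noteq> i - 1 \<longrightarrow> \<pi> ! j < \<pi> ! i)"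
      by (metis Suc_pred' bot_nat_0.not_eq_extremum diff_Suc_1 not_less0)
    then show ?thesis
      using all_positive_shift[of i "\<lambda>_. True" "\<lambda>j. \<pi> ! j < \<pi> ! i"]
        all_positive_shift[of i "\<lambda>j. j \<noteq> i" "\<lambda>j. \<pi> ! j < \<pi> ! i"]
      by (cases "even i") auto
  qed
  moreover have "(\<forall>i\<in>{1..length \<pi>}. ?pos i) \<longleftrightarrow> (\<forall>i<length \<pi>. ?pos (Suc i))"
    unfolding image_Suc_lessThan[symmetric] by blast
  ultimately show ?thesis unfolding twin_lr_maxima_def by presburger
qed

theorem mainTheorem7:
  fixes \<pi> :: "nat list" and n :: nat
  assumes "n \<ge> 1"
    and "length \<pi> = n" and "distinct \<pi>" and "set \<pi> = {1..n}"
  shows "length (schroeder_P \<pi>) = 1 \<longleftrightarrow>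
    (\<forall>i\<in>{1..n}.
       (odd i \<longrightarrow> (\<forall>j. 1 \<le> j \<and> j < i \<longrightarrow> \<pi> ! (j - 1) < \<pi> ! (i - 1))) \<and>
       (even i \<longrightarrow> (\<forall>j. 1 \<le> j \<and> j < i \<and> j \<noteq> i - 1 \<longrightarrow> \<pi> ! (j - 1) < \<pi> ! (i - 1))))"
proof -
  have "\<pi> \<noteq> []" using assms(1,2) by auto
  then have "length (schroeder_P \<pi>) = 1 \<longleftrightarrow> twin_lr_maxima \<pi>"
    using schroeder_P_single_row[OF assms(3)] by blast
  then show ?thesis using twin_lr_maxima_iff_positions[of \<pi>] assms(2) by simp
qed

end
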